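(* Let $A$ be a circular $m\times n$ matrix, $\alpha$ a positive integer and $x^*\in Q(A,\alpha\mathbf{1})$. Then for every $i\in[m]$, in $D(A,x^* )$ (with $b=\alpha\mathbf{1}$): (i) $c^+_i(x^* )-c^+(P_i^+,x^* )=-\mu\alpha$, where $c^+(P_i^+,x^* )=\sum_{j=\ell_i}^{\ell_i+k_i-1}c^+_{m+j}(x^* )$ is the cost of the path $P_i^+$ of forward short arcs from $\ell_i-1$ to $\ell_i+k_i-1$; (ii) $c^-_i(x^* )-c^-(P_i^-,x^* )=-(1-\mu)\alpha$, where $c^-(P_i^-,x^* )=\sum_{j=\ell_i}^{\ell_i+k_i-1}c^-_{m+j}(x^* )$ is the cost of the path $P_i^-$ of reverse short arcs from $\ell_i+k_i-1$ to $\ell_i-1$. (Column indices $j$ are taken modulo $n$ in $[n]$.)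
   Context: Notation: $[n]=\{1,\dots,n\}$ with addition mod $n$ (index $0$ identified with $n$); for $a,c\in[n]$ with $t\ge0$ minimal such that $a+t\equiv c\pmod n$, $[a,c)_n=\{a,\dots,a+t-1\}$ (mod $n$). An $m\times n$ $\{0,1\}$-matrix $A$ is circular if for each row $i$ there are $\ell_i\in[n]$ and an integer $2\le k_i\le n-1$ with row $i$ the incidence vector of $[\ell_i,\ell_i+k_i)_n$. $Q(A,b)=\{x\ge0:Ax\ge b\}$. $D(A)$: node set $[n]$ (labels mod $n$); forward arcs $a_i=(\ell_i-1,\ell_i+k_i-1)$ ($i\in[m]$) and $a_{m+j}=(j-1,j)$ ($j\in[n]$); reverse arcs $\bar a_i=(\ell_i+k_i-1,\ell_i-1)$ and $\bar a_{m+j}=(j,j-1)$. Costs: $\tilde A=\binom{A}{I}$ ($I$ the $n\times n$ identity), $d=\binom{b}{0}$, $v$ = last column of $\tilde A$; for $x^*\in Q(A,b)$: $s^*=\tilde Ax^*-d$, $\mu=\lceil\mathbf{1}^Tx^*\rceil-\mathbf{1}^Tx^*$, $c^+(x^* )=\mu(s^*-(1-\mu)v)$, $c^-(x^* )=(1-\mu)(s^*+\mu v)$. In $D(A,x^* )$ arc $a_k$ ($k\in[m+n]$) has cost $c^+_k(x^* )$ and arc $\bar a_k$ has cost $c^-_k(x^* )$; the cost of a path is the sum of its arc costs. *)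

theory Defs
  imports Complex_Main
begin

text \<open>Labels are taken in [n] = {1..n}; an integer x is reduced mod n into [n]
  (residue 0 identified with n).\<close>
definition wrap :: "nat \<Rightarrow> nat \<Rightarrow> nat" where
  "wrap n x = (if x mod n = 0 then n else x mod n)"

definition circ_interval :: "nat \<Rightarrow> nat \<Rightarrow> nat \<Rightarrow> nat set" where
  "circ_interval n a c =
     (let t = (LEAST t. wrap n (a + t) = wrap n c) in {wrap n (a + s) | s. s < t})"

definition circular_with ::
  "nat \<Rightarrow> nat \<Rightarrow> (nat \<Rightarrow> nat \<Rightarrow> real) \<Rightarrow> (nat \<Rightarrow> nat) \<Rightarrow> (nat \<Rightarrow> nat) \<Rightarrow> bool" where
  "circular_with m n A l k \<longleftrightarrow>
     (\<forall>i\<in>{1..m}. l i \<in> {1..n} \<and> 2 \<le> k i \<and> k i \<le> n - 1 \<and>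
        (\<forall>j\<in>{1..n}. A i j =
           (if j \<in> circ_interval n (l i) (wrap n (l i + k i)) then 1 else 0)))"

definition circular :: "nat \<Rightarrow> nat \<Rightarrow> (nat \<Rightarrow> nat \<Rightarrow> real) \<Rightarrow> bool" where
  "circular m n A \<longleftrightarrow> (\<exists>l k. circular_with m n A l k)"

definition Qpoly ::
  "nat \<Rightarrow> nat \<Rightarrow> (nat \<Rightarrow> nat \<Rightarrow> real) \<Rightarrow> (nat \<Rightarrow> real) \<Rightarrow> (nat \<Rightarrow> real) set" where
  "Qpoly m n A b = {x. (\<forall>j\<in>{1..n}. 0 \<le> x j) \<and>
                       (\<forall>i\<in>{1..m}. (\<Sum>j=1..n. A i j * x j) \<ge> b i)}"

definition Atilde :: "nat \<Rightarrow> (nat \<Rightarrow> nat \<Rightarrow> real) \<Rightarrow> nat \<Rightarrow> nat \<Rightarrow> real" where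
  "Atilde m A r j = (if r \<le> m then A r j else (if r - m = j then 1 else 0))"

definition dvec :: "nat \<Rightarrow> (nat \<Rightarrow> real) \<Rightarrow> nat \<Rightarrow> real" where
  "dvec m b r = (if r \<le> m then b r else 0)"

definition vvec :: "nat \<Rightarrow> nat \<Rightarrow> (nat \<Rightarrow> nat \<Rightarrow> real) \<Rightarrow> nat \<Rightarrow> real" where
  "vvec m n A r = Atilde m A r n"

definition sstar ::
  "nat \<Rightarrow> nat \<Rightarrow> (nat \<Rightarrow> nat \<Rightarrow> real) \<Rightarrow> (nat \<Rightarrow> real) \<Rightarrow> (nat \<Rightarrow> real) \<Rightarrow> nat \<Rightarrow> real" where
  "sstar m n A b x r = (\<Sum>j=1..n. Atilde m A r j * x j) - dvec m b r"

definition mu :: "nat \<Rightarrow> (nat \<Rightarrow> real) \<Rightarrow> real" where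
  "mu n x = of_int \<lceil>\<Sum>j=1..n. x j\<rceil> - (\<Sum>j=1..n. x j)"

definition cplus ::
  "nat \<Rightarrow> nat \<Rightarrow> (nat \<Rightarrow> nat \<Rightarrow> real) \<Rightarrow> (nat \<Rightarrow> real) \<Rightarrow> (nat \<Rightarrow> real) \<Rightarrow> nat \<Rightarrow> real" where
  "cplus m n A b x r = mu n x * (sstar m n A b x r - (1 - mu n x) * vvec m n A r)"

definition cminus ::
  "nat \<Rightarrow> nat \<Rightarrow> (nat \<Rightarrow> nat \<Rightarrow> real) \<Rightarrow> (nat \<Rightarrow> real) \<Rightarrow> (nat \<Rightarrow> real) \<Rightarrow> nat \<Rightarrow> real" where
  "cminus m n A b x r = (1 - mu n x) * (sstar m n A b x r + mu n x * vvec m n A r)"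

end

theory Submission
  imports Defs "HOL-Number_Theory.Cong"
begin

text \<open>Row i of A is the indicator of the circular interval S = [l_i, l_i + k_i)_n, and the rows
  m + j of the identity block of (A; I) have slack x_j and last entry [j = n]. Summing these rows
  over j in S therefore reproduces the slack of row i plus its right-hand side, and the last
  entry of row i. Since c^+ and c^- are affine in (s^*, v) with the same coefficients on every
  row, the arc cost minus the path cost collapses to the multiple of the right-hand side.\<close>

lemma wrap_in: "n > 0 \<Longrightarrow> wrap n a \<in> {1..n}"
  unfolding wrap_def by auto

lemma wrap_eq_iff: "n > 0 \<Longrightarrow> wrap n a = wrap n b \<longleftrightarrow> a mod n = b mod n"
  unfolding wrap_def by (smt (verit) mod_less_divisor nat_neq_iff)

lemma wrap_wrap: "n > 0 \<Longrightarrow> wrap n (wrap n a) = wrap n a"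
  unfolding wrap_def by auto

lemma add_mod_cancel_left_less:
  fixes a s t n :: nat
  assumes "(a + s) mod n = (a + t) mod n" "s < n" "t < n"
  shows "s = t"
proof -
  have "[s = t] (mod n)"
    using assms(1) cong_add_lcancel_nat[of a s t n] unfolding cong_def by blast
  with assms(2,3) show ?thesis by (simp add: cong_def)
qed

lemma inj_on_wrap_add:
  assumes "k \<le> n"
  shows "inj_on (\<lambda>t. wrap n (a + t)) {..<k}"
proof (rule inj_onI)
  fix s t assume "s \<in> {..<k}" "t \<in> {..<k}" "wrap n (a + s) = wrap n (a + t)"
  with assms show "s = t"
    by (auto simp: wrap_eq_iff intro: add_mod_cancel_left_less)
qed

lemma circ_interval_wrap_add:
  assumes "k < n"
  shows "circ_interval n a (wrap n (a + k)) = (\<lambda>t. wrap n (a + t)) ` {..<k}"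
proof -
  have n: "n > 0" using assms by simp
  have "(LEAST t. wrap n (a + t) = wrap n (wrap n (a + k))) = k"
  proof (rule Least_equality)
    show "wrap n (a + k) = wrap n (wrap n (a + k))" by (simp add: wrap_wrap[OF n])
  next
    fix t assume "wrap n (a + t) = wrap n (wrap n (a + k))"
    hence eq: "(a + t) mod n = (a + k) mod n" by (simp add: wrap_wrap[OF n] wrap_eq_iff[OF n])
    show "k \<le> t"
    proof (rule ccontr)
      assume "\<not> k \<le> t"
      with eq assms show False using add_mod_cancel_left_less[of a t n k] by simp
    qed
  qed
  thus ?thesis unfolding circ_interval_def Let_def by auto
qed

lemma sstar_identity_row:
  assumes "j \<in> {1..n}"
  shows "sstar m n A b x (m + j) = x j"
proof -
  have "sstar m n A b x (m + j) = (\<Sum>i\<in>{1..n}. (if j = i then 1 else 0) * x i)"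
    unfolding sstar_def Atilde_def dvec_def using assms by simp
  also have "\<dots> = (\<Sum>i\<in>{1..n}. if j = i then x i else 0)"
    by (intro sum.cong) auto
  finally show ?thesis using assms by simp
qed

lemma vvec_identity_row:
  "j \<in> {1..n} \<Longrightarrow> vvec m n A (m + j) = (if j = n then 1 else 0)"
  unfolding vvec_def Atilde_def by auto

lemma sum_sstar_identity_rows:
  assumes "S \<subseteq> {1..n}"
  shows "(\<Sum>j\<in>S. sstar m n A b x (m + j)) = (\<Sum>j\<in>S. x j)"
  using assms by (intro sum.cong) (auto simp: sstar_identity_row)

lemma sum_vvec_identity_rows:
  assumes "S \<subseteq> {1..n}"
  shows "(\<Sum>j\<in>S. vvec m n A (m + j)) = (if n \<in> S then 1 else 0)"
proof -
  have "finite S" using assms finite_subset by blast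
  have "(\<Sum>j\<in>S. vvec m n A (m + j)) = (\<Sum>j\<in>S. if j = n then 1 else 0)"
    using assms by (intro sum.cong) (auto simp: vvec_identity_row)
  thus ?thesis using \<open>finite S\<close> by simp
qed

locale indicator_row =
  fixes m n :: nat and A :: "nat \<Rightarrow> nat \<Rightarrow> real" and r :: nat and S :: "nat set"
  assumes row: "r \<le> m"
    and n_pos: "n > 0"
    and support: "S \<subseteq> {1..n}"
    and indicator: "\<And>j. j \<in> {1..n} \<Longrightarrow> A r j = (if j \<in> S then 1 else 0)"
begin

lemma sstar_eq_sum_path:
  "sstar m n A b x r = (\<Sum>j\<in>S. sstar m n A b x (m + j)) - b r"
proof -
  have "(\<Sum>j=1..n. A r j * x j) = (\<Sum>j\<in>{1..n}. if j \<in> S then x j else 0)"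
    by (intro sum.cong) (simp_all add: indicator)
  also have "\<dots> = (\<Sum>j\<in>S. x j)"
    using support by (simp add: sum.If_cases Int_absorb1)
  also have "\<dots> = (\<Sum>j\<in>S. sstar m n A b x (m + j))"
    by (simp add: sum_sstar_identity_rows[OF support])
  finally show ?thesis
    unfolding sstar_def[of _ _ _ _ _ r] Atilde_def dvec_def using row by simp
qed

lemma vvec_eq_sum_path:
  "vvec m n A r = (\<Sum>j\<in>S. vvec m n A (m + j))"
proof -
  have "vvec m n A r = (if n \<in> S then 1 else 0)"
    unfolding vvec_def Atilde_def using row n_pos by (simp add: indicator)
  thus ?thesis by (simp add: sum_vvec_identity_rows[OF support])
qed

lemma cplus_minus_sum_path:
  "cplus m n A b x r - (\<Sum>j\<in>S. cplus m n A b x (m + j)) = - mu n x * b r"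
proof -
  have "(\<Sum>j\<in>S. cplus m n A b x (m + j)) = mu n x *
      ((\<Sum>j\<in>S. sstar m n A b x (m + j)) - (1 - mu n x) * (\<Sum>j\<in>S. vvec m n A (m + j)))"
    unfolding cplus_def by (simp add: sum_distrib_left sum_subtractf right_diff_distrib)
  thus ?thesis
    unfolding cplus_def sstar_eq_sum_path vvec_eq_sum_path by (simp add: algebra_simps)
qed

lemma cminus_minus_sum_path:
  "cminus m n A b x r - (\<Sum>j\<in>S. cminus m n A b x (m + j)) = - (1 - mu n x) * b r"
proof -
  have "(\<Sum>j\<in>S. cminus m n A b x (m + j)) = (1 - mu n x) *
      ((\<Sum>j\<in>S. sstar m n A b x (m + j)) + mu n x * (\<Sum>j\<in>S. vvec m n A (m + j)))"
    unfolding cminus_def by (simp add: sum_distrib_left sum.distrib distrib_left)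
  thus ?thesis
    unfolding cminus_def sstar_eq_sum_path vvec_eq_sum_path by (simp add: algebra_simps)
qed

end

theorem lemma5p1:
  fixes m n :: nat and A :: "nat \<Rightarrow> nat \<Rightarrow> real" and l k :: "nat \<Rightarrow> nat"
    and \<alpha> :: nat and x :: "nat \<Rightarrow> real" and i :: nat
  assumes circ: "circular_with m n A l k"
    and alpha_pos: "\<alpha> > 0"
    and xQ: "x \<in> Qpoly m n A (\<lambda>_. real \<alpha>)"
    and i: "i \<in> {1..m}"
  shows "cplus m n A (\<lambda>_. real \<alpha>) x i
           - (\<Sum>t<k i. cplus m n A (\<lambda>_. real \<alpha>) x (m + wrap n (l i + t)))
         = - mu n x * real \<alpha> \<and>
         cminus m n A (\<lambda>_. real \<alpha>) x i
           - (\<Sum>t<k i. cminus m n A (\<lambda>_. real \<alpha>) x (m + wrap n (l i + t)))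
         = - (1 - mu n x) * real \<alpha>"
proof -
  define W where "W t = wrap n (l i + t)" for t
  have k_bounds: "2 \<le> k i" "k i \<le> n - 1"
    and row_i: "\<And>j. j \<in> {1..n} \<Longrightarrow>
      A i j = (if j \<in> circ_interval n (l i) (wrap n (l i + k i)) then 1 else 0)"
    using circ i unfolding circular_with_def by auto
  have k_less: "k i < n" using k_bounds by linarith
  have path: "circ_interval n (l i) (wrap n (l i + k i)) = W ` {..<k i}"
    unfolding W_def using k_less by (rule circ_interval_wrap_add)
  interpret indicator_row m n A i "W ` {..<k i}"
  proof
    show "i \<le> m" "0 < n" using i k_less by auto
    show "W ` {..<k i} \<subseteq> {1..n}" using wrap_in[of n] k_less by (auto simp: W_def)
    show "A i j = (if j \<in> W ` {..<k i} then 1 else 0)" if "j \<in> {1..n}" for j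
      using row_i[OF that] by (simp only: path)
  qed
  have reindex: "(\<Sum>j\<in>W ` {..<k i}. f (m + j)) = (\<Sum>t<k i. f (m + wrap n (l i + t)))"
    for f :: "nat \<Rightarrow> real"
    using inj_on_wrap_add[of "k i" n "l i"] k_less by (simp add: sum.reindex W_def)
  show ?thesis
    using cplus_minus_sum_path cminus_minus_sum_path by (simp only: reindex)
qed

end
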